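(* Suppose that (i) $K:\mathbb R^p\rightrightarrows\mathbb R^n$ is affine, and (ii) $f:\mathbb R^p\times\mathbb R^n\times\mathbb R^n\to\mathbb R^m$ is $C$-concave. Then the function $\mathfrak m=\nu+\mu$ is convex on $\mathbb R^p\times\mathbb R^n$ and the solution mapping $E$ is convex, in the sense that $\operatorname{gph}E$ is a convex subset of $\mathbb R^p\times\mathbb R^n$.
   Context: $C\subset\mathbb R^m$ nontrivial closed convex pointed cone; $K$ has closed graph and nonempty values (standing assumption). VEP($\xi$): find $x\in K(\xi)$ with $f(\xi,x,z)\in C$ for all $z\in K(\xi)$; $E(\xi)$ its solution set. $\nu(\xi,x)=\sup_{z\in K(\xi)}\operatorname{dist}(f(\xi,x,z),C)$, $\mu(\xi,x)=\operatorname{dist}(x,K(\xi))$, $\mathfrak m=\nu+\mu$. $g$ is $C$-concave if $g(tx_1+(1-t)x_2)-tg(x_1)-(1-t)g(x_2)\in C$ for all $x_1,x_2$, $t\in[0,1]$. A set-valued map $F$ is affine if $F(tx_1+(1-t)x_2)=tF(x_1)+(1-t)F(x_2)$ for all $x_1,x_2$, $t\in[0,1]$. *)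

theory Defs
  imports "HOL-Analysis.Analysis"
begin

definition msum :: "'a::real_vector set \<Rightarrow> 'a set \<Rightarrow> 'a set" where
  "msum A B = {a + b | a b. a \<in> A \<and> b \<in> B}"

definition affine_setmap :: "('a::real_vector \<Rightarrow> 'b::real_vector set) \<Rightarrow> bool" where
  "affine_setmap F \<longleftrightarrow> (\<forall>x1 x2 t. 0 \<le> t \<and> t \<le> 1 \<longrightarrow>
     F (t *\<^sub>R x1 + (1 - t) *\<^sub>R x2) = msum ((\<lambda>y. t *\<^sub>R y) ` F x1) ((\<lambda>y. (1 - t) *\<^sub>R y) ` F x2))"

definition C_concave :: "'b::real_vector set \<Rightarrow> ('a::real_vector \<Rightarrow> 'b) \<Rightarrow> bool" where
  "C_concave C g \<longleftrightarrow> (\<forall>x1 x2 t. 0 \<le> t \<and> t \<le> 1 \<longrightarrow>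
     g (t *\<^sub>R x1 + (1 - t) *\<^sub>R x2) - t *\<^sub>R g x1 - (1 - t) *\<^sub>R g x2 \<in> C)"

definition VEP_sol :: "('p \<Rightarrow> 'n set) \<Rightarrow> ('p \<Rightarrow> 'n \<Rightarrow> 'n \<Rightarrow> 'm) \<Rightarrow> 'm set \<Rightarrow> 'p \<Rightarrow> 'n set" where
  "VEP_sol K f C xi = {x \<in> K xi. \<forall>z \<in> K xi. f xi x z \<in> C}"

definition gap_nu :: "('p \<Rightarrow> 'n set) \<Rightarrow> ('p \<Rightarrow> 'n \<Rightarrow> 'n \<Rightarrow> 'm::metric_space) \<Rightarrow> 'm set \<Rightarrow> 'p \<Rightarrow> 'n \<Rightarrow> ereal" where
  "gap_nu K f C xi x = (SUP z \<in> K xi. ereal (infdist (f xi x z) C))"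

definition gap_mu :: "('p \<Rightarrow> 'n::metric_space set) \<Rightarrow> 'p \<Rightarrow> 'n \<Rightarrow> ereal" where
  "gap_mu K xi x = ereal (infdist x (K xi))"

definition convex_ereal_fun :: "('a::real_vector \<Rightarrow> ereal) \<Rightarrow> bool" where
  "convex_ereal_fun g \<longleftrightarrow> (\<forall>u v t. 0 < t \<and> t < 1 \<longrightarrow>
     g (t *\<^sub>R u + (1 - t) *\<^sub>R v) \<le> ereal t * g u + ereal (1 - t) * g v)"

end

theory Submission
  imports Defs
begin

text \<open>By affinity of \<open>K\<close>, every \<open>z \<in> K (t\<xi>\<^sub>1 + (1-t)\<xi>\<^sub>2)\<close> splits as \<open>t z\<^sub>1 + (1-t) z\<^sub>2\<close>
  with \<open>z\<^sub>i \<in> K \<xi>\<^sub>i\<close>, and by \<open>C\<close>-concavity the value of \<open>f\<close> at the combined point exceeds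
  the corresponding combination of values of \<open>f\<close> by an element of \<open>C\<close>. Adding an element of
  the convex cone \<open>C\<close> does not increase the distance to \<open>C\<close>, and distances to convex sets,
  or to the values of an affine map, are convex; this yields convexity of \<open>\<nu>\<close> and \<open>\<mu>\<close>.
  The same decomposition shows that the graph of the solution map is convex, since \<open>C\<close> is
  closed under convex combinations and addition.\<close>

lemma convex_cone_convex: "convex_cone C \<Longrightarrow> convex C"
  by (simp add: convex_cone_def)

lemma mem_convex_cone_if_diff_mem:
  fixes C :: "'a::real_vector set"
  assumes "convex_cone C" "b \<in> C" "a - b \<in> C"
  shows "a \<in> C"
  using convex_cone_add[OF assms] by simp

lemma infdist_le_if_diff_in_convex_cone:
  fixes C :: "'a::real_normed_vector set"
  assumes "convex_cone C" "a - b \<in> C"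
  shows "infdist a C \<le> infdist b C"
proof -
  have "infdist a C \<le> dist b c" if "c \<in> C" for c
  proof -
    have "infdist a C \<le> dist a (c + (a - b))"
      using assms that by (intro infdist_le convex_cone_add)
    also have "\<dots> = dist b c"
      by (simp add: dist_norm norm_minus_commute)
    finally show ?thesis .
  qed
  then show ?thesis
    unfolding infdist_def using convex_cone_nonempty[OF assms(1)] by (auto intro!: cINF_greatest)
qed

lemma infdist_convex_combination_le:
  fixes A B D :: "'a::{real_normed_vector, heine_borel} set"
  assumes "closed A" "A \<noteq> {}" "closed B" "B \<noteq> {}" "0 \<le> t" "t \<le> 1"
    and comb: "\<And>a b. a \<in> A \<Longrightarrow> b \<in> B \<Longrightarrow> t *\<^sub>R a + (1 - t) *\<^sub>R b \<in> D"
  shows "infdist (t *\<^sub>R x + (1 - t) *\<^sub>R y) D \<le> t * infdist x A + (1 - t) * infdist y B"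
proof -
  obtain a where a: "a \<in> A" "infdist x A = dist x a"
    using infdist_attains_inf[OF assms(1,2)] by blast
  obtain b where b: "b \<in> B" "infdist y B = dist y b"
    using infdist_attains_inf[OF assms(3,4)] by blast
  have "infdist (t *\<^sub>R x + (1 - t) *\<^sub>R y) D \<le> dist (t *\<^sub>R x + (1 - t) *\<^sub>R y) (t *\<^sub>R a + (1 - t) *\<^sub>R b)"
    using comb[OF a(1) b(1)] by (rule infdist_le)
  also have "\<dots> = norm (t *\<^sub>R (x - a) + (1 - t) *\<^sub>R (y - b))"
    by (simp add: dist_norm algebra_simps)
  also have "\<dots> \<le> norm (t *\<^sub>R (x - a)) + norm ((1 - t) *\<^sub>R (y - b))"
    by (rule norm_triangle_ineq)
  also have "\<dots> = t * dist x a + (1 - t) * dist y b"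
    using assms(5,6) by (simp add: dist_norm)
  finally show ?thesis
    using a b by simp
qed

lemma closed_values_of_closed_graph:
  fixes K :: "'a::topological_space \<Rightarrow> 'b::topological_space set"
  assumes "closed {(xi, x). x \<in> K xi}"
  shows "closed (K xi)"
proof -
  have "closed ((\<lambda>x. (xi, x)) -` {(xi, x). x \<in> K xi})"
    using assms by (rule closed_vimage) (intro continuous_intros)
  then show ?thesis
    by simp
qed

lemma affine_setmap_combination_mem:
  assumes "affine_setmap K" "0 \<le> t" "t \<le> 1" "z1 \<in> K xi1" "z2 \<in> K xi2"
  shows "t *\<^sub>R z1 + (1 - t) *\<^sub>R z2 \<in> K (t *\<^sub>R xi1 + (1 - t) *\<^sub>R xi2)"
  using assms unfolding affine_setmap_def msum_def by auto

lemma affine_setmap_combinationE: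
  assumes "affine_setmap K" "0 \<le> t" "t \<le> 1" "z \<in> K (t *\<^sub>R xi1 + (1 - t) *\<^sub>R xi2)"
  obtains z1 z2 where "z1 \<in> K xi1" "z2 \<in> K xi2" "z = t *\<^sub>R z1 + (1 - t) *\<^sub>R z2"
  using assms unfolding affine_setmap_def msum_def by auto

lemma C_concave_curried3D:
  assumes "C_concave C (\<lambda>(xi, x, z). f xi x z)" "0 \<le> t" "t \<le> 1"
  shows "f (t *\<^sub>R xi1 + (1 - t) *\<^sub>R xi2) (t *\<^sub>R x1 + (1 - t) *\<^sub>R x2) (t *\<^sub>R z1 + (1 - t) *\<^sub>R z2)
           - t *\<^sub>R f xi1 x1 z1 - (1 - t) *\<^sub>R f xi2 x2 z2 \<in> C"
  using assms unfolding C_concave_def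
  by (drule_tac x="(xi1, x1, z1)" in spec, drule_tac x="(xi2, x2, z2)" in spec,
      drule_tac x=t in spec) simp

lemma gap_mu_convex_combination_le:
  fixes K :: "'p::real_vector \<Rightarrow> 'n::{real_normed_vector, heine_borel} set"
  assumes "affine_setmap K" "\<And>xi. closed (K xi)" "\<And>xi. K xi \<noteq> {}" "0 \<le> t" "t \<le> 1"
  shows "gap_mu K (t *\<^sub>R xi1 + (1 - t) *\<^sub>R xi2) (t *\<^sub>R x1 + (1 - t) *\<^sub>R x2)
           \<le> ereal t * gap_mu K xi1 x1 + ereal (1 - t) * gap_mu K xi2 x2"
  using infdist_convex_combination_le[OF assms(2,3,2,3,4,5) affine_setmap_combination_mem[OF assms(1,4,5)]]
  by (simp add: gap_mu_def)

lemma gap_nu_convex_combination_le: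
  fixes C :: "'m::{real_normed_vector, heine_borel} set"
  assumes C: "convex_cone C" "closed C"
    and K: "affine_setmap K" and f: "C_concave C (\<lambda>(xi, x, z). f xi x z)"
    and t: "0 \<le> t" "t \<le> 1"
  shows "gap_nu K f C (t *\<^sub>R xi1 + (1 - t) *\<^sub>R xi2) (t *\<^sub>R x1 + (1 - t) *\<^sub>R x2)
           \<le> ereal t * gap_nu K f C xi1 x1 + ereal (1 - t) * gap_nu K f C xi2 x2"
  unfolding gap_nu_def
proof (rule SUP_least)
  let ?xi = "t *\<^sub>R xi1 + (1 - t) *\<^sub>R xi2" and ?x = "t *\<^sub>R x1 + (1 - t) *\<^sub>R x2"
  fix z assume "z \<in> K ?xi"
  then obtain z1 z2 where z: "z1 \<in> K xi1" "z2 \<in> K xi2" "z = t *\<^sub>R z1 + (1 - t) *\<^sub>R z2"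
    using affine_setmap_combinationE[OF K t] by blast
  have "infdist (f ?xi ?x z) C \<le> infdist (t *\<^sub>R f xi1 x1 z1 + (1 - t) *\<^sub>R f xi2 x2 z2) C"
    unfolding z(3) using C_concave_curried3D[OF f t]
    by (intro infdist_le_if_diff_in_convex_cone[OF C(1)]) (simp add: diff_diff_eq)
  also have "\<dots> \<le> t * infdist (f xi1 x1 z1) C + (1 - t) * infdist (f xi2 x2 z2) C"
    using C t convex_cone_nonempty[OF C(1)] convexD[OF convex_cone_convex[OF C(1)]]
    by (intro infdist_convex_combination_le) auto
  finally have "ereal (infdist (f ?xi ?x z) C)
      \<le> ereal t * ereal (infdist (f xi1 x1 z1) C) + ereal (1 - t) * ereal (infdist (f xi2 x2 z2) C)"
    by simp
  also have "\<dots> \<le> ereal t * (SUP z\<in>K xi1. ereal (infdist (f xi1 x1 z) C))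
      + ereal (1 - t) * (SUP z\<in>K xi2. ereal (infdist (f xi2 x2 z) C))"
    using t z by (intro add_mono ereal_mult_left_mono SUP_upper) auto
  finally show "ereal (infdist (f ?xi ?x z) C)
      \<le> ereal t * (SUP z\<in>K xi1. ereal (infdist (f xi1 x1 z) C))
      + ereal (1 - t) * (SUP z\<in>K xi2. ereal (infdist (f xi2 x2 z) C))" .
qed

lemma convex_ereal_fun_uncurryI:
  assumes "\<And>xi1 xi2 x1 x2 t. 0 < t \<Longrightarrow> t < 1 \<Longrightarrow>
    g (t *\<^sub>R xi1 + (1 - t) *\<^sub>R xi2) (t *\<^sub>R x1 + (1 - t) *\<^sub>R x2) \<le> ereal t * g xi1 x1 + ereal (1 - t) * g xi2 x2"
  shows "convex_ereal_fun (\<lambda>(xi, x). g xi x)"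
  unfolding convex_ereal_fun_def using assms by auto

lemma convex_ereal_fun_add:
  assumes "convex_ereal_fun g" "convex_ereal_fun h"
  shows "convex_ereal_fun (\<lambda>u. g u + h u)"
  unfolding convex_ereal_fun_def
proof (intro allI impI)
  fix u v and t :: real assume t: "0 < t \<and> t < 1"
  have "g (t *\<^sub>R u + (1 - t) *\<^sub>R v) + h (t *\<^sub>R u + (1 - t) *\<^sub>R v)
      \<le> (ereal t * g u + ereal (1 - t) * g v) + (ereal t * h u + ereal (1 - t) * h v)"
    using assms t unfolding convex_ereal_fun_def by (intro add_mono) auto
  also have "\<dots> = ereal t * (g u + h u) + ereal (1 - t) * (g v + h v)"
    using t by (simp add: ereal_pos_distrib add_ac)
  finally show "g (t *\<^sub>R u + (1 - t) *\<^sub>R v) + h (t *\<^sub>R u + (1 - t) *\<^sub>R v)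
      \<le> ereal t * (g u + h u) + ereal (1 - t) * (g v + h v)" .
qed

lemma convex_VEP_sol_graph:
  assumes C: "convex_cone C" and K: "affine_setmap K" and f: "C_concave C (\<lambda>(xi, x, z). f xi x z)"
  shows "convex {(xi, x). x \<in> VEP_sol K f C xi}"
proof (rule convexI)
  fix u v and s t :: real
  assume "u \<in> {(xi, x). x \<in> VEP_sol K f C xi}" "v \<in> {(xi, x). x \<in> VEP_sol K f C xi}"
    and st: "0 \<le> s" "0 \<le> t" "s + t = 1"
  then obtain xi1 x1 xi2 x2 where uv: "u = (xi1, x1)" "v = (xi2, x2)"
    and sol1: "x1 \<in> K xi1" "\<And>z. z \<in> K xi1 \<Longrightarrow> f xi1 x1 z \<in> C"
    and sol2: "x2 \<in> K xi2" "\<And>z. z \<in> K xi2 \<Longrightarrow> f xi2 x2 z \<in> C"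
    by (cases u, cases v) (auto simp: VEP_sol_def)
  have s: "0 \<le> s" "s \<le> 1" "t = 1 - s"
    using st by auto
  have "s *\<^sub>R x1 + (1 - s) *\<^sub>R x2 \<in> VEP_sol K f C (s *\<^sub>R xi1 + (1 - s) *\<^sub>R xi2)"
    unfolding VEP_sol_def
  proof (intro CollectI conjI ballI)
    show "s *\<^sub>R x1 + (1 - s) *\<^sub>R x2 \<in> K (s *\<^sub>R xi1 + (1 - s) *\<^sub>R xi2)"
      using affine_setmap_combination_mem[OF K s(1,2) sol1(1) sol2(1)] .
    fix z assume "z \<in> K (s *\<^sub>R xi1 + (1 - s) *\<^sub>R xi2)"
    then obtain z1 z2 where z: "z1 \<in> K xi1" "z2 \<in> K xi2" "z = s *\<^sub>R z1 + (1 - s) *\<^sub>R z2"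
      using affine_setmap_combinationE[OF K s(1,2)] by blast
    have comb: "s *\<^sub>R f xi1 x1 z1 + (1 - s) *\<^sub>R f xi2 x2 z2 \<in> C"
      by (rule convexD[OF convex_cone_convex[OF C] sol1(2)[OF z(1)] sol2(2)[OF z(2)]]) (use s in auto)
    show "f (s *\<^sub>R xi1 + (1 - s) *\<^sub>R xi2) (s *\<^sub>R x1 + (1 - s) *\<^sub>R x2) z \<in> C"
    proof (rule mem_convex_cone_if_diff_mem[OF C comb])
      show "f (s *\<^sub>R xi1 + (1 - s) *\<^sub>R xi2) (s *\<^sub>R x1 + (1 - s) *\<^sub>R x2) z
          - (s *\<^sub>R f xi1 x1 z1 + (1 - s) *\<^sub>R f xi2 x2 z2) \<in> C"
        unfolding z(3) using C_concave_curried3D[OF f s(1,2)] by (simp add: diff_diff_eq)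
    qed
  qed
  then show "s *\<^sub>R u + t *\<^sub>R v \<in> {(xi, x). x \<in> VEP_sol K f C xi}"
    using uv s by simp
qed

theorem mainTheorem6:
  fixes C :: "'m::euclidean_space set"
    and K :: "'p::euclidean_space \<Rightarrow> 'n::euclidean_space set"
    and f :: "'p \<Rightarrow> 'n \<Rightarrow> 'n \<Rightarrow> 'm"
  assumes C_closed: "closed C" and C_convex: "convex C" and C_cone: "cone C"
    and C_pointed: "C \<inter> uminus ` C = {0}" and C_nontrivial: "C \<noteq> {0}"
    and K_closed_graph: "closed {(xi, x). x \<in> K xi}"
    and K_nonempty: "\<And>xi. K xi \<noteq> {}"
    and K_affine: "affine_setmap K"
    and f_concave: "C_concave C (\<lambda>(xi, x, z). f xi x z)"
  shows "convex_ereal_fun (\<lambda>(xi, x). gap_nu K f C xi x + gap_mu K xi x)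
    \<and> convex {(xi, x). x \<in> VEP_sol K f C xi}"
proof
  have "0 \<in> C"
    using C_pointed by blast
  then have C: "convex_cone C"
    using C_convex C_cone unfolding convex_cone_def cone_def conic_def by blast
  have K_closed: "closed (K xi)" for xi
    using K_closed_graph by (rule closed_values_of_closed_graph)
  have nu: "convex_ereal_fun (\<lambda>(xi, x). gap_nu K f C xi x)"
    using gap_nu_convex_combination_le[OF C C_closed K_affine f_concave]
    by (intro convex_ereal_fun_uncurryI) simp
  have mu: "convex_ereal_fun (\<lambda>(xi, x). gap_mu K xi x)"
    using gap_mu_convex_combination_le[OF K_affine K_closed K_nonempty]
    by (intro convex_ereal_fun_uncurryI) simp
  show "convex_ereal_fun (\<lambda>(xi, x). gap_nu K f C xi x + gap_mu K xi x)"
    using convex_ereal_fun_add[OF nu mu] by (simp add: case_prod_unfold)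
  show "convex {(xi, x). x \<in> VEP_sol K f C xi}"
    using C K_affine f_concave by (rule convex_VEP_sol_graph)
qed

end
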